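(* For every $P_{\rm r}>0$ and $\mathcal C_x\in[0,1)$, the ergodic rate $\mathcal R_{\rm E-E}=\mathbb E[\min(R_{\rm sr},R_{\rm rd})]$ equals \[ \mathcal R_{\rm E-E}=\int_0^\infty\!\!\int_0^\infty \sum_{m=0}^{m_{\rm rd}-1}\sum_{k=0}^m\binom mk\frac{P_{\rm s}^k\Gamma(k+m_{\rm sd})}{\Gamma(m+1)}\cdot\frac{x^{m_{\rm rr}-1}\Gamma\!\left(m_{\rm sr},\frac{P_{\rm r}x+1}{P_{\rm s}\theta_{\rm sr}}\Psi_r\!\left(\frac{P_{\rm r}x\mathcal C_x}{P_{\rm r}x+1}\right)\right)\beta_r^m\,e^{-(\beta_r+x/\theta_{\rm rr})}}{\Gamma(m_{\rm sd})\Gamma(m_{\rm rr})\Gamma(m_{\rm sr})\theta_{\rm sd}^{m_{\rm sd}}\theta_{\rm rr}^{m_{\rm rr}}\left(P_{\rm s}\beta_r+\frac1{\theta_{\rm sd}}\right)^{k+m_{\rm sd}}}\,dx\,dr, \] where $\beta_r=\frac{\Psi_r(\mathcal C_x)}{P_{\rm r}\theta_{\rm rd}(1-\mathcal C_x^2)}$ and $\Psi_r$ depends on the integration variable $r$.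
   Context: Let $P_{\rm s}>0$, $P_{\rm r}>0$ be the source and relay transmit powers. For links $ij\in\{\mathrm{sr},\mathrm{rr},\mathrm{rd},\mathrm{sd}\}$ let $g_{ij}$ be mutually independent random channel gains, $g_{ij}$ gamma distributed with integer shape parameter $m_{ij}\ge1$ and scale $\theta_{ij}=\pi_{ij}/m_{ij}$, where $\pi_{ij}=\mathbb E[g_{ij}]>0$; i.e. $g_{ij}$ has density $x^{m_{ij}-1}e^{-x/\theta_{ij}}/(\Gamma(m_{ij})\theta_{ij}^{m_{ij}})$ for $x\ge0$. For a circularity coefficient $\mathcal C_x\in[0,1)$ define $R_{\rm sr}(P_{\rm r},\mathcal C_x)=\tfrac12\log_2\frac{(P_{\rm s}g_{\rm sr}+P_{\rm r}g_{\rm rr}+1)^2-(P_{\rm r}g_{\rm rr}\mathcal C_x)^2}{(P_{\rm r}g_{\rm rr}+1)^2-(P_{\rm r}g_{\rm rr}\mathcal C_x)^2}$ and $R_{\rm rd}(P_{\rm r},\mathcal C_x)=\tfrac12\log_2\frac{(P_{\rm r}g_{\rm rd}+P_{\rm s}g_{\rm sd}+1)^2-(P_{\rm r}g_{\rm rd}\mathcal C_x)^2}{(P_{\rm s}g_{\rm sd}+1)^2}$. For $r>0$ put $\gamma=2^{2r}-1$ and $\Psi_r(x)=\sqrt{1+\gamma(1-x^2)}-1$. $\Gamma(a,x)=\int_x^\infty t^{a-1}e^{-t}dt$ is the upper incomplete gamma function. *)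

theory Defs
  imports "HOL-Probability.Probability"
begin

datatype link = SR | RR | RD | SD

definition gamma_density :: "nat \<Rightarrow> real \<Rightarrow> real \<Rightarrow> real" where
  "gamma_density m \<theta> x =
     (if x < 0 then 0 else x ^ (m - 1) * exp (- x / \<theta>) / (Gamma (real m) * \<theta> ^ m))"

definition upper_Gamma :: "real \<Rightarrow> real \<Rightarrow> real" where
  "upper_Gamma a x = (LBINT t:{x..}. t powr (a - 1) * exp (- t))"

definition R_sr :: "real \<Rightarrow> real \<Rightarrow> real \<Rightarrow> real \<Rightarrow> real \<Rightarrow> real" where
  "R_sr Ps Pr Cx gsr grr =
     1/2 * log 2 (((Ps * gsr + Pr * grr + 1)\<^sup>2 - (Pr * grr * Cx)\<^sup>2) /
                  ((Pr * grr + 1)\<^sup>2 - (Pr * grr * Cx)\<^sup>2))"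

definition R_rd :: "real \<Rightarrow> real \<Rightarrow> real \<Rightarrow> real \<Rightarrow> real \<Rightarrow> real" where
  "R_rd Ps Pr Cx grd gsd =
     1/2 * log 2 (((Pr * grd + Ps * gsd + 1)\<^sup>2 - (Pr * grd * Cx)\<^sup>2) / (Ps * gsd + 1)\<^sup>2)"

definition Psi :: "real \<Rightarrow> real \<Rightarrow> real" where
  "Psi r x = sqrt (1 + (2 powr (2 * r) - 1) * (1 - x\<^sup>2)) - 1"

end

theory Submission
  imports Defs
begin

text \<open>
  The ergodic rate is computed with the layer-cake formula \<open>E[Z] = \<integral>\<^sub>0\<^sup>\<infinity> P(Z > r) dr\<close>.
  Since \<open>R\<^sub>s\<^sub>r\<close> depends only on \<open>(g\<^sub>s\<^sub>r, g\<^sub>r\<^sub>r)\<close> and \<open>R\<^sub>r\<^sub>d\<close> only on \<open>(g\<^sub>r\<^sub>d, g\<^sub>s\<^sub>d)\<close>,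
  \<open>P(min R\<^sub>s\<^sub>r R\<^sub>r\<^sub>d > r)\<close> factors into two probabilities, and each of them is a threshold
  event for a single gain: \<open>R\<^sub>s\<^sub>r > r\<close> iff \<open>P\<^sub>s g\<^sub>s\<^sub>r > (P\<^sub>r g\<^sub>r\<^sub>r + 1) \<Psi>\<^sub>r(\<dots>)\<close>, and \<open>R\<^sub>r\<^sub>d > r\<close>
  iff \<open>g\<^sub>r\<^sub>d > \<theta>\<^sub>r\<^sub>d \<beta>\<^sub>r (P\<^sub>s g\<^sub>s\<^sub>d + 1)\<close>. With integer shapes the gains are Erlang distributed,
  so conditioning on the other gain turns each probability into an integral of an Erlang tail.
  For \<open>R\<^sub>s\<^sub>r\<close> this tail is the upper incomplete Gamma function of the inner integral; for
  \<open>R\<^sub>r\<^sub>d\<close> it is a finite Poisson sum which, after binomial expansion, integrates term by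
  term to Erlang moments of \<open>g\<^sub>s\<^sub>d\<close> and yields the finite double sum.
\<close>

lemma sqrt_less_iff_less_power2: "0 \<le> y \<Longrightarrow> sqrt x < y \<longleftrightarrow> x < y\<^sup>2"
  by (metis abs_of_nonneg real_sqrt_abs real_sqrt_less_iff)

lemma power2_less_power2_iff: "0 \<le> x \<Longrightarrow> 0 \<le> (y::real) \<Longrightarrow> x\<^sup>2 < y\<^sup>2 \<longleftrightarrow> x < y"
  by (metis pos2 power_less_imp_less_base power_strict_mono)

lemma less_half_log2_iff: "0 < q \<Longrightarrow> r < 1/2 * log 2 q \<longleftrightarrow> 2 powr (2*r) < q"
  using less_log_iff[of 2 q "2*r"] by auto

lemma Psi_nonneg: "0 \<le> r \<Longrightarrow> \<bar>c\<bar> \<le> 1 \<Longrightarrow> 0 \<le> Psi r c"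
  unfolding Psi_def using ge_one_powr_ge_zero[of 2 "2*r"] abs_square_le_1[of c] by simp

lemma less_R_sr_iff:
  assumes "0 < Ps" "0 < Pr" "0 \<le> Cx" "Cx < 1" "0 \<le> a" "0 \<le> b"
  shows "r < R_sr Ps Pr Cx a b \<longleftrightarrow> (Pr*b + 1) * Psi r (Pr*b*Cx / (Pr*b + 1)) < Ps*a"
proof -
  define D e u K where "D = Pr*b + 1" and "e = Pr*b*Cx" and "u = Ps*a + D" and "K = (2::real) powr (2*r)"
  have "0 \<le> Pr*b" "Pr*b*Cx \<le> Pr*b"
    using assms mult_left_le[of Cx "Pr*b"] by auto
  moreover have "0 \<le> Pr*b*Cx" "0 \<le> Ps*a"
    using assms by simp_all
  ultimately have "0 < D" "0 \<le> e" "e < D" "D \<le> u"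
    unfolding D_def e_def u_def by linarith+
  then have den: "0 < D\<^sup>2 - e\<^sup>2" and num: "0 < u\<^sup>2 - e\<^sup>2"
    by (simp_all add: power_strict_mono)
  have rad: "D\<^sup>2 * (1 + (K - 1) * (1 - (e/D)\<^sup>2)) = K * (D\<^sup>2 - e\<^sup>2) + e\<^sup>2"
    using \<open>0 < D\<close> by (simp add: field_simps power2_eq_square)
  have "0 \<le> K * (D\<^sup>2 - e\<^sup>2) + e\<^sup>2"
    using den by (simp add: K_def)
  then have sqrt_rad: "D * sqrt (1 + (K - 1) * (1 - (e/D)\<^sup>2)) = sqrt (K * (D\<^sup>2 - e\<^sup>2) + e\<^sup>2)"
    using \<open>0 < D\<close> rad by (metis abs_of_pos real_sqrt_abs real_sqrt_mult)
  have R: "R_sr Ps Pr Cx a b = 1/2 * log 2 ((u\<^sup>2 - e\<^sup>2) / (D\<^sup>2 - e\<^sup>2))"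
    by (simp add: R_sr_def u_def D_def e_def algebra_simps)
  have "r < R_sr Ps Pr Cx a b \<longleftrightarrow> K < (u\<^sup>2 - e\<^sup>2) / (D\<^sup>2 - e\<^sup>2)"
    unfolding R K_def by (rule less_half_log2_iff) (use num den in simp)
  also have "\<dots> \<longleftrightarrow> K * (D\<^sup>2 - e\<^sup>2) + e\<^sup>2 < u\<^sup>2"
    using den by (simp add: pos_less_divide_eq less_diff_eq)
  also have "\<dots> \<longleftrightarrow> D * sqrt (1 + (K - 1) * (1 - (e/D)\<^sup>2)) < u"
    using \<open>0 < D\<close> \<open>D \<le> u\<close> by (simp add: sqrt_rad sqrt_less_iff_less_power2)
  also have "\<dots> \<longleftrightarrow> D * Psi r (e/D) < Ps*a"
    by (simp add: Psi_def K_def u_def algebra_simps)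
  finally show ?thesis
    by (simp add: D_def e_def)
qed

lemma less_R_rd_iff:
  assumes "0 < Ps" "0 < Pr" "0 \<le> Cx" "Cx < 1" "0 \<le> c" "0 \<le> d"
  shows "r < R_rd Ps Pr Cx c d \<longleftrightarrow> (Ps*d + 1) * Psi r Cx / (Pr * (1 - Cx\<^sup>2)) < c"
proof -
  define S v t K where "S = Ps*d + 1" and "v = Pr*c" and "t = 1 - Cx\<^sup>2" and "K = (2::real) powr (2*r)"
  have "0 < S"
    using assms mult_nonneg_nonneg[of Ps d] unfolding S_def by linarith
  have "0 \<le> v" "0 < t" "t \<le> 1"
    using assms by (auto simp: v_def t_def abs_square_less_1)
  have "v * Cx < v + S"
    using \<open>0 < S\<close> \<open>0 \<le> v\<close> assms(4) mult_left_le[of Cx v] by linarith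
  then have num: "0 < (v + S)\<^sup>2 - (v * Cx)\<^sup>2"
    using \<open>0 \<le> v\<close> assms(3) by (simp add: power_strict_mono)
  have "0 < K * t"
    using \<open>0 < t\<close> by (simp add: K_def)
  moreover have "1 + (K - 1) * t = (1 - t) + K * t"
    by (simp add: algebra_simps)
  ultimately have rad: "0 \<le> 1 + (K - 1) * t"
    using \<open>t \<le> 1\<close> by linarith
  then have sqrt_sq: "(S * sqrt (1 + (K - 1) * t))\<^sup>2 = S\<^sup>2 * (1 + (K - 1) * t)"
    by (simp add: power_mult_distrib)
  have Cx_sq: "(v * Cx)\<^sup>2 = v\<^sup>2 * (1 - t)"
    by (simp add: t_def power_mult_distrib)
  have sq: "t * ((v + S)\<^sup>2 - (v * Cx)\<^sup>2) - t * (K * S\<^sup>2) = (v * t + S)\<^sup>2 - (S * sqrt (1 + (K - 1) * t))\<^sup>2"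
    unfolding sqrt_sq Cx_sq by (simp add: power2_eq_square algebra_simps)
  have R: "R_rd Ps Pr Cx c d = 1/2 * log 2 (((v + S)\<^sup>2 - (v * Cx)\<^sup>2) / S\<^sup>2)"
    by (simp add: R_rd_def S_def v_def algebra_simps)
  have "r < R_rd Ps Pr Cx c d \<longleftrightarrow> K < ((v + S)\<^sup>2 - (v * Cx)\<^sup>2) / S\<^sup>2"
    unfolding R K_def by (rule less_half_log2_iff) (use num \<open>0 < S\<close> in simp)
  also have "\<dots> \<longleftrightarrow> t * (K * S\<^sup>2) < t * ((v + S)\<^sup>2 - (v * Cx)\<^sup>2)"
    using \<open>0 < S\<close> \<open>0 < t\<close> by (simp add: pos_less_divide_eq)
  also have "\<dots> \<longleftrightarrow> (S * sqrt (1 + (K - 1) * t))\<^sup>2 < (v * t + S)\<^sup>2"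
    using sq by linarith
  also have "\<dots> \<longleftrightarrow> S * sqrt (1 + (K - 1) * t) < v * t + S"
    using \<open>0 < S\<close> \<open>0 \<le> v\<close> \<open>0 < t\<close> rad by (intro power2_less_power2_iff) auto
  also have "\<dots> \<longleftrightarrow> S * (sqrt (1 + (K - 1) * t) - 1) / (Pr * t) < c"
    using \<open>0 < t\<close> assms(2) by (simp add: v_def pos_divide_less_eq algebra_simps)
  finally show ?thesis
    by (simp add: S_def t_def K_def Psi_def)
qed

lemma R_sr_nonneg:
  assumes "0 < Ps" "0 < Pr" "0 \<le> Cx" "Cx < 1" "0 \<le> a" "0 \<le> b"
  shows "0 \<le> R_sr Ps Pr Cx a b"
proof -
  have "0 \<le> Pr*b*Cx" "Pr*b*Cx \<le> Pr*b"
    using assms mult_left_le[of Cx "Pr*b"] by auto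
  then have den: "(Pr*b*Cx)\<^sup>2 < (Pr*b + 1)\<^sup>2"
    by (intro power_strict_mono) auto
  have "(Pr*b + 1)\<^sup>2 \<le> (Ps*a + Pr*b + 1)\<^sup>2"
    using assms by (intro power_mono) auto
  with den show ?thesis
    by (simp add: R_sr_def le_divide_eq)
qed

lemma R_rd_nonneg:
  assumes "0 < Ps" "0 < Pr" "0 \<le> Cx" "Cx < 1" "0 \<le> c" "0 \<le> d"
  shows "0 \<le> R_rd Ps Pr Cx c d"
proof -
  have "(Pr*c*Cx)\<^sup>2 \<le> (Pr*c)\<^sup>2"
    using assms by (intro power_mono) (auto simp: mult_left_le)
  moreover have "(Ps*d + 1)\<^sup>2 + (Pr*c)\<^sup>2 \<le> (Pr*c + Ps*d + 1)\<^sup>2"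
    using assms by (simp add: power2_eq_square algebra_simps)
  moreover have "0 < Ps*d + 1"
    using assms mult_nonneg_nonneg[of Ps d] by linarith
  ultimately have "1 \<le> ((Pr*c + Ps*d + 1)\<^sup>2 - (Pr*c*Cx)\<^sup>2) / (Ps*d + 1)\<^sup>2"
    by (simp add: le_divide_eq)
  then show ?thesis
    by (simp add: R_rd_def)
qed

lemma Gamma_of_nat_eq_fact: "0 < m \<Longrightarrow> Gamma (real m) = fact (m - 1)"
  using Gamma_fact[of "m - 1", where 'a=real] by (simp add: of_nat_diff)

lemma gamma_density_eq_erlang_density:
  "0 < m \<Longrightarrow> 0 < \<theta> \<Longrightarrow> gamma_density m \<theta> = erlang_density (m - 1) (1/\<theta>)"
  by (auto simp: fun_eq_iff gamma_density_def erlang_density_def Gamma_of_nat_eq_fact power_divide field_simps)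

lemma erlang_CDF_le_1: "0 < l \<Longrightarrow> erlang_CDF k l t \<le> 1"
  by (auto simp: erlang_CDF_def intro!: sum_nonneg)

lemma nn_integral_erlang_density_greater:
  assumes "0 < l"
  shows "(\<integral>\<^sup>+ x. ennreal (erlang_density k l x) * indicator {t<..} x \<partial>lborel) = 1 - erlang_CDF k l t"
proof -
  let ?D = "density lborel (erlang_density k l)"
  interpret D: prob_space ?D
    using prob_space_erlang_density[OF assms] .
  have "(\<integral>\<^sup>+ x. ennreal (erlang_density k l x) * indicator {t<..} x \<partial>lborel) = emeasure ?D (space ?D - {..t})"
    by (simp add: emeasure_density Compl_eq_Diff_UNIV[symmetric] not_le)
  also have "\<dots> = ennreal (1 - measure ?D {..t})"
    using D.prob_compl[of "{..t}"] by (simp add: D.emeasure_eq_measure)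
  also have "measure ?D {..t} = erlang_CDF k l t"
    using emeasure_erlang_density[OF assms, of k t] erlang_CDF_nonneg[OF assms]
    by (simp add: D.emeasure_eq_measure)
  finally show ?thesis .
qed

lemma upper_Gamma_eq_erlang_tail:
  assumes "0 \<le> z"
  shows "upper_Gamma (real (Suc k)) z = fact k * (1 - erlang_CDF k 1 z)"
proof -
  have "(\<integral>\<^sup>+ t. ennreal (indicator {z..} t * (t powr real k * exp (- t))) \<partial>lborel)
      = (\<integral>\<^sup>+ t. ennreal (fact k) * (ennreal (erlang_density k 1 t) * indicator {z<..} t) \<partial>lborel)"
  proof (intro nn_integral_cong_AE eventually_mono[OF AE_lborel_singleton[of z]])
    fix t :: real
    assume "t \<noteq> z"
    then show "ennreal (indicator {z..} t * (t powr real k * exp (- t))) =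
          ennreal (fact k) * (ennreal (erlang_density k 1 t) * indicator {z<..} t)"
      using assms by (cases "z < t") (auto simp: erlang_density_def powr_realpow ennreal_mult[symmetric])
  qed
  also have "\<dots> = ennreal (fact k * (1 - erlang_CDF k 1 z))"
    by (simp add: nn_integral_cmult nn_integral_erlang_density_greater ennreal_mult erlang_CDF_le_1)
  finally show ?thesis
    unfolding upper_Gamma_def set_lebesgue_integral_def
    by (subst integral_eq_nn_integral) (auto simp: erlang_CDF_le_1)
qed

lemma (in prob_space) AE_nonneg_if_distributed:
  fixes X :: "'a \<Rightarrow> real"
  assumes "distributed M lborel X f" and "\<And>x. x < 0 \<Longrightarrow> f x = 0"
  shows "AE \<omega> in M. 0 \<le> X \<omega>"
proof -
  have "AE x in distr M lborel X. 0 \<le> x"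
    unfolding distributed_distr_eq_density[OF assms(1)]
  proof (subst AE_density)
    show "f \<in> borel_measurable lborel"
      using distributed_borel_measurable[OF assms(1)] .
    show "AE x in lborel. 0 < f x \<longrightarrow> 0 \<le> x"
      using assms(2) by (intro AE_I2) (metis not_le less_irrefl)
  qed
  then show ?thesis
    by (rule AE_distrD[rotated]) (use distributed_measurable[OF assms(1)] in simp)
qed

lemma (in prob_space) emeasure_indep_erlang_greater:
  assumes indep: "indep_var borel X borel Y"
    and X: "distributed M lborel X (erlang_density k l)" and Y: "distributed M lborel Y fY"
    and "0 < l" and [measurable]: "T \<in> borel_measurable borel"
  shows "emeasure M {\<omega>\<in>space M. T (Y \<omega>) < X \<omega>} = (\<integral>\<^sup>+ y. fY y * (1 - erlang_CDF k l (T y)) \<partial>lborel)"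
proof -
  have "indep_var lborel X lborel Y"
    using indep_var_compose[OF indep, of id lborel id lborel] by simp
  then have XY: "distributed M (lborel \<Otimes>\<^sub>M lborel) (\<lambda>\<omega>. (X \<omega>, Y \<omega>))
      (\<lambda>(x, y). ennreal (erlang_density k l x) * fY y)"
    using distributed_joint_indep[OF lborel.sigma_finite_measure_axioms lborel.sigma_finite_measure_axioms X Y]
    by simp
  note [measurable] = distributed_borel_measurable[OF XY]
  define S where "S = {p \<in> space (lborel \<Otimes>\<^sub>M lborel). T (snd p) < fst p}"
  have S[measurable]: "S \<in> sets (lborel \<Otimes>\<^sub>M lborel)"
    unfolding S_def by measurable
  have "{\<omega>\<in>space M. T (Y \<omega>) < X \<omega>} = (\<lambda>\<omega>. (X \<omega>, Y \<omega>)) -` S \<inter> space M"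
    by (auto simp: S_def space_pair_measure)
  then have "emeasure M {\<omega>\<in>space M. T (Y \<omega>) < X \<omega>} =
      (\<integral>\<^sup>+ p. (\<lambda>(x, y). ennreal (erlang_density k l x) * fY y) p * indicator S p \<partial>(lborel \<Otimes>\<^sub>M lborel))"
    using distributed_emeasure[OF XY S] by simp
  also have "\<dots> = (\<integral>\<^sup>+ y. \<integral>\<^sup>+ x. (\<lambda>(x, y). ennreal (erlang_density k l x) * fY y) (x, y) * indicator S (x, y) \<partial>lborel \<partial>lborel)"
    by (rule lborel_pair.nn_integral_snd[symmetric]) measurable
  also have "\<dots> = (\<integral>\<^sup>+ y. \<integral>\<^sup>+ x. fY y * (ennreal (erlang_density k l x) * indicator {T y<..} x) \<partial>lborel \<partial>lborel)"
    by (auto intro!: nn_integral_cong simp: S_def space_pair_measure indicator_def mult.commute)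
  also have "\<dots> = (\<integral>\<^sup>+ y. fY y * (1 - erlang_CDF k l (T y)) \<partial>lborel)"
    using \<open>0 < l\<close> by (simp add: nn_integral_cmult nn_integral_erlang_density_greater)
  finally show ?thesis .
qed

lemma (in prob_space) emeasure_indep_erlang_threshold:
  fixes X Y :: "'a \<Rightarrow> real"
  assumes indep: "indep_var borel X borel Y"
    and X: "distributed M lborel X (erlang_density k l)" and Y: "distributed M lborel Y fY"
    and "0 < l" and "\<And>y. y < 0 \<Longrightarrow> fY y = 0"
    and [measurable]: "Measurable.pred (borel \<Otimes>\<^sub>M borel) (\<lambda>(x, y). P x y)" "T \<in> borel_measurable borel"
    and threshold: "\<And>x y. 0 \<le> x \<Longrightarrow> 0 \<le> y \<Longrightarrow> P x y \<longleftrightarrow> T y < x"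
  shows "emeasure M {\<omega>\<in>space M. P (X \<omega>) (Y \<omega>)} = (\<integral>\<^sup>+ y. fY y * (1 - erlang_CDF k l (T y)) \<partial>lborel)"
proof -
  have [measurable]: "X \<in> borel_measurable M" "Y \<in> borel_measurable M"
    using distributed_measurable[OF X] distributed_measurable[OF Y] by simp_all
  have nonneg: "AE \<omega> in M. 0 \<le> X \<omega> \<and> 0 \<le> Y \<omega>"
    using AE_nonneg_if_distributed[OF X] AE_nonneg_if_distributed[OF Y] assms(5)
    by (auto simp: erlang_density_def)
  have "emeasure M {\<omega>\<in>space M. P (X \<omega>) (Y \<omega>)} = emeasure M {\<omega>\<in>space M. T (Y \<omega>) < X \<omega>}"
  proof (rule emeasure_Collect_eq_AE)
    show "AE \<omega> in M. P (X \<omega>) (Y \<omega>) \<longleftrightarrow> T (Y \<omega>) < X \<omega>"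
      using nonneg by eventually_elim (simp add: threshold)
  qed measurable
  also have "\<dots> = (\<integral>\<^sup>+ y. fY y * (1 - erlang_CDF k l (T y)) \<partial>lborel)"
    using assms by (intro emeasure_indep_erlang_greater[OF indep X Y])
  finally show ?thesis .
qed

lemma erlang_density_mult_exp:
  assumes "0 < l" "0 < a + l"
  shows "erlang_density k l d * exp (- (b + a*d)) = exp (- b) * (l / (a + l)) ^ Suc k * erlang_density k (a + l) d"
proof (cases "d < 0")
  case True
  then show ?thesis
    by (simp add: erlang_density_def)
next
  case False
  have exp: "exp (- l * d) * exp (- (b + a*d)) = exp (- b) * exp (- (a + l) * d)"
    by (simp flip: exp_add add: algebra_simps)
  have "erlang_density k l d * exp (- (b + a*d)) = l ^ Suc k * d^k * (exp (- l * d) * exp (- (b + a*d))) / fact k"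
    using False by (simp add: erlang_density_def)
  also have "\<dots> = exp (- b) * (l / (a + l)) ^ Suc k * erlang_density k (a + l) d"
    using False assms unfolding exp by (simp add: erlang_density_def power_divide)
  finally show ?thesis .
qed

lemma erlang_density_mult_erlang_tail:
  assumes "0 < l" "0 \<le> \<beta>" "0 \<le> Ps"
  defines "L \<equiv> Ps*\<beta> + l"
  shows "erlang_density k l d * (1 - erlang_CDF j 1 (\<beta> * (Ps*d + 1))) =
    (\<Sum>n\<le>j. \<Sum>i\<le>n. real (n choose i) * Ps^i * \<beta>^n * exp (- \<beta>) / fact n * (l / L) ^ Suc k
       * (erlang_density k L d * d^i))"
proof (cases "d < 0")
  case True
  then show ?thesis
    by (simp add: erlang_density_def)
next
  case False
  have "0 < L"
    using assms by (simp add: L_def add_nonneg_pos)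
  have "(Ps*d + 1)^n = (\<Sum>i\<le>n. real (n choose i) * Ps^i * d^i)" for n
    using binomial_ring[of "Ps*d" 1 n] by (simp add: power_mult_distrib atLeast0AtMost mult_ac)
  then have binomial: "(\<beta> * (Ps*d + 1))^n = (\<Sum>i\<le>n. real (n choose i) * Ps^i * \<beta>^n * d^i)" for n
    by (simp add: power_mult_distrib sum_distrib_left mult_ac)
  have "erlang_density k l d * (1 - erlang_CDF j 1 (\<beta> * (Ps*d + 1))) =
      (\<Sum>n\<le>j. (\<beta> * (Ps*d + 1))^n / fact n * (erlang_density k l d * exp (- (\<beta> + Ps*\<beta>*d))))"
  proof -
    have "0 \<le> \<beta> * (Ps*d + 1)"
      using False assms by simp
    then have tail: "1 - erlang_CDF j 1 (\<beta> * (Ps*d + 1)) =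
        (\<Sum>n\<le>j. (\<beta> * (Ps*d + 1))^n * exp (- (\<beta> * (Ps*d + 1))) / fact n)"
      by (simp add: erlang_CDF_def)
    show ?thesis
      unfolding tail by (simp add: sum_distrib_left algebra_simps)
  qed
  also have "\<dots> = (\<Sum>n\<le>j. (\<beta> * (Ps*d + 1))^n / fact n * (exp (- \<beta>) * (l / L) ^ Suc k * erlang_density k L d))"
    using erlang_density_mult_exp[of l "Ps*\<beta>"] assms \<open>0 < L\<close> by (simp add: L_def)
  also have "\<dots> = (\<Sum>n\<le>j. \<Sum>i\<le>n. real (n choose i) * Ps^i * \<beta>^n * exp (- \<beta>) / fact n * (l / L) ^ Suc k
       * (erlang_density k L d * d^i))"
    unfolding binomial sum_divide_distrib sum_distrib_right
    by (intro sum.cong refl) (simp add: algebra_simps)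
  finally show ?thesis .
qed


lemma nn_integral_erlang_density_mult_erlang_tail:
  assumes "0 < l" "0 \<le> \<beta>" "0 \<le> Ps"
  defines "L \<equiv> Ps*\<beta> + l"
  shows "(\<integral>\<^sup>+ d. ennreal (erlang_density k l d) * ennreal (1 - erlang_CDF j 1 (\<beta> * (Ps*d + 1))) \<partial>lborel) =
    ennreal (\<Sum>n\<le>j. \<Sum>i\<le>n. real (n choose i) * Ps^i * \<beta>^n * exp (- \<beta>) / fact n * (l / L) ^ Suc k
       * (fact (k + i) / (fact k * L^i)))"
proof -
  define c where "c n i = real (n choose i) * Ps^i * \<beta>^n * exp (- \<beta>) / fact n * (l / L) ^ Suc k" for n i
  have "0 < L"
    using assms by (simp add: L_def add_nonneg_pos)
  then have c: "0 \<le> c n i" and moment: "0 \<le> erlang_density k L d * d^i" for n i d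
    using assms by (auto simp: c_def erlang_density_def)
  have "(\<integral>\<^sup>+ d. ennreal (erlang_density k l d) * ennreal (1 - erlang_CDF j 1 (\<beta> * (Ps*d + 1))) \<partial>lborel) =
      (\<integral>\<^sup>+ d. (\<Sum>n\<le>j. \<Sum>i\<le>n. ennreal (c n i * (erlang_density k L d * d^i))) \<partial>lborel)"
  proof (intro nn_integral_cong)
    fix d :: real
    have "ennreal (erlang_density k l d) * ennreal (1 - erlang_CDF j 1 (\<beta> * (Ps*d + 1))) =
        ennreal (erlang_density k l d * (1 - erlang_CDF j 1 (\<beta> * (Ps*d + 1))))"
      using assms erlang_CDF_le_1[of 1 j] by (simp add: ennreal_mult)
    also have "\<dots> = ennreal (\<Sum>n\<le>j. \<Sum>i\<le>n. c n i * (erlang_density k L d * d^i))"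
      using erlang_density_mult_erlang_tail[OF assms(1-3), where k=k and j=j and d=d]
      by (simp add: c_def L_def)
    also have "\<dots> = (\<Sum>n\<le>j. \<Sum>i\<le>n. ennreal (c n i * (erlang_density k L d * d^i)))"
      using c moment by (simp add: sum_nonneg)
    finally show "ennreal (erlang_density k l d) * ennreal (1 - erlang_CDF j 1 (\<beta> * (Ps*d + 1))) =
        (\<Sum>n\<le>j. \<Sum>i\<le>n. ennreal (c n i * (erlang_density k L d * d^i)))" .
  qed
  also have "\<dots> = (\<Sum>n\<le>j. \<Sum>i\<le>n. ennreal (c n i) * (\<integral>\<^sup>+ d. ennreal (erlang_density k L d * d^i) \<partial>lborel))"
    using c moment by (simp add: nn_integral_sum ennreal_mult nn_integral_cmult)
  also have "\<dots> = (\<Sum>n\<le>j. \<Sum>i\<le>n. ennreal (c n i) * ennreal (fact (k + i) / (fact k * L^i)))"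
    using \<open>0 < L\<close> by (simp add: nn_integral_erlang_ith_moment)
  also have "\<dots> = ennreal (\<Sum>n\<le>j. \<Sum>i\<le>n. c n i * (fact (k + i) / (fact k * L^i)))"
    using c \<open>0 < L\<close> by (simp add: ennreal_mult'[symmetric] sum_nonneg)
  finally show ?thesis
    by (simp add: c_def)
qed

definition R_rd_tail_prob :: "real \<Rightarrow> real \<Rightarrow> real \<Rightarrow> nat \<Rightarrow> real \<Rightarrow> nat \<Rightarrow> real \<Rightarrow> real \<Rightarrow> real" where
  "R_rd_tail_prob Ps Pr Cx mrd \<theta>rd msd \<theta>sd r =
     (let \<beta> = Psi r Cx / (Pr * \<theta>rd * (1 - Cx\<^sup>2)) in
      \<Sum>n<mrd. \<Sum>k\<le>n. real (n choose k) * Ps^k * Gamma (real (k + msd)) / Gamma (real n + 1) * \<beta>^n * exp (- \<beta>)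
        / (Gamma (real msd) * \<theta>sd ^ msd * (Ps*\<beta> + 1/\<theta>sd) ^ (k + msd)))"

lemma R_rd_tail_prob_eq_fact_sum:
  fixes Ps Pr Cx \<theta>rd \<theta>sd r :: real
  defines "\<beta> \<equiv> Psi r Cx / (Pr * \<theta>rd * (1 - Cx\<^sup>2))"
  defines "L \<equiv> Ps*\<beta> + 1/\<theta>sd"
  assumes "0 < mrd" "0 < msd" "0 < \<theta>sd" "0 < L"
  shows "R_rd_tail_prob Ps Pr Cx mrd \<theta>rd msd \<theta>sd r =
    (\<Sum>n\<le>mrd - 1. \<Sum>i\<le>n. real (n choose i) * Ps^i * \<beta>^n * exp (- \<beta>) / fact n
      * (1/\<theta>sd / L) ^ Suc (msd - 1) * (fact (msd - 1 + i) / (fact (msd - 1) * L^i)))"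
proof -
  have "{..mrd - 1} = {..<mrd}"
    using assms by auto
  moreover have "real (n choose i) * Ps^i * Gamma (real (i + msd)) / Gamma (real n + 1) * \<beta>^n * exp (- \<beta>)
           / (Gamma (real msd) * \<theta>sd ^ msd * L ^ (i + msd)) =
      real (n choose i) * Ps^i * \<beta>^n * exp (- \<beta>) / fact n * (1/\<theta>sd / L) ^ Suc (msd - 1)
           * (fact (msd - 1 + i) / (fact (msd - 1) * L^i))" for n i
  proof -
    have Gamma: "Gamma (real (i + msd)) = fact (msd - 1 + i)" "Gamma (real n + 1) = fact n"
        "Gamma (real msd) = fact (msd - 1)"
      using assms Gamma_of_nat_eq_fact[of "i + msd"] Gamma_of_nat_eq_fact[of msd] Gamma_fact[of n]
      by (simp_all add: add.commute)
    have "(1/\<theta>sd / L) ^ Suc (msd - 1) = 1 / (\<theta>sd ^ msd * L ^ msd)"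
      using assms by (simp add: power_divide power_mult_distrib)
    then show ?thesis
      unfolding Gamma using assms(3-5) by (simp add: power_add field_simps)
  qed
  ultimately show ?thesis
    by (simp add: R_rd_tail_prob_def Let_def \<beta>_def[symmetric] L_def[symmetric])
qed

lemma (in prob_space) prob_R_rd_greater:
  assumes indep: "indep_var borel X borel Y"
    and X: "distributed M lborel X (gamma_density mrd \<theta>rd)"
    and Y: "distributed M lborel Y (gamma_density msd \<theta>sd)"
    and "0 < mrd" "0 < msd" "0 < \<theta>rd" "0 < \<theta>sd"
    and "0 < Ps" "0 < Pr" "0 \<le> Cx" "Cx < 1" "0 \<le> r"
  shows "prob {\<omega>\<in>space M. r < R_rd Ps Pr Cx (X \<omega>) (Y \<omega>)} = R_rd_tail_prob Ps Pr Cx mrd \<theta>rd msd \<theta>sd r"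
proof -
  define \<beta> where "\<beta> = Psi r Cx / (Pr * \<theta>rd * (1 - Cx\<^sup>2))"
  define L where "L = Ps*\<beta> + 1/\<theta>sd"
  have "0 < 1 - Cx\<^sup>2"
    using assms by (simp add: abs_square_less_1)
  then have "0 \<le> \<beta>"
    using assms Psi_nonneg[of r Cx] by (simp add: \<beta>_def)
  then have "0 < L"
    using assms by (simp add: L_def add_nonneg_pos)
  have X': "distributed M lborel X (erlang_density (mrd - 1) (1/\<theta>rd))"
    using X assms by (simp add: gamma_density_eq_erlang_density)
  have Y': "distributed M lborel Y (erlang_density (msd - 1) (1/\<theta>sd))"
    using Y assms by (simp add: gamma_density_eq_erlang_density)
  have threshold: "(Ps*y + 1) * Psi r Cx / (Pr * (1 - Cx\<^sup>2)) = \<theta>rd * (\<beta> * (Ps*y + 1))" for y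
    using assms \<open>0 < 1 - Cx\<^sup>2\<close> by (simp add: \<beta>_def)
  have "Measurable.pred (borel \<Otimes>\<^sub>M borel) (\<lambda>(x, y). r < R_rd Ps Pr Cx x y)"
    unfolding R_rd_def by measurable
  then have "emeasure M {\<omega>\<in>space M. r < R_rd Ps Pr Cx (X \<omega>) (Y \<omega>)} =
      (\<integral>\<^sup>+ y. ennreal (erlang_density (msd - 1) (1/\<theta>sd) y) *
        ennreal (1 - erlang_CDF (mrd - 1) (1/\<theta>rd) (\<theta>rd * (\<beta> * (Ps * y + 1)))) \<partial>lborel)"
    using assms
    by (intro emeasure_indep_erlang_threshold[OF indep X' Y'])
       (auto simp: erlang_density_def less_R_rd_iff threshold)
  also have "\<dots> = (\<integral>\<^sup>+ y. ennreal (erlang_density (msd - 1) (1/\<theta>sd) y) *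
      ennreal (1 - erlang_CDF (mrd - 1) 1 (\<beta> * (Ps * y + 1))) \<partial>lborel)"
    using assms by (simp add: erlang_CDF_transform[of "1/\<theta>rd"])
  also have "\<dots> = ennreal (\<Sum>n\<le>mrd - 1. \<Sum>i\<le>n. real (n choose i) * Ps^i * \<beta>^n * exp (- \<beta>) / fact n
      * (1/\<theta>sd / L) ^ Suc (msd - 1) * (fact (msd - 1 + i) / (fact (msd - 1) * L^i)))"
    using assms \<open>0 \<le> \<beta>\<close> unfolding L_def by (intro nn_integral_erlang_density_mult_erlang_tail) auto
  finally have "prob {\<omega>\<in>space M. r < R_rd Ps Pr Cx (X \<omega>) (Y \<omega>)} =
      (\<Sum>n\<le>mrd - 1. \<Sum>i\<le>n. real (n choose i) * Ps^i * \<beta>^n * exp (- \<beta>) / fact n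
      * (1/\<theta>sd / L) ^ Suc (msd - 1) * (fact (msd - 1 + i) / (fact (msd - 1) * L^i)))"
    using \<open>0 \<le> \<beta>\<close> \<open>0 < L\<close> assms by (simp add: emeasure_eq_measure sum_nonneg)
  also have "\<dots> = R_rd_tail_prob Ps Pr Cx mrd \<theta>rd msd \<theta>sd r"
    using assms \<open>0 < L\<close> by (simp add: R_rd_tail_prob_eq_fact_sum \<beta>_def L_def)
  finally show ?thesis .
qed

lemma (in prob_space) prob_R_sr_greater:
  assumes indep: "indep_var borel X borel Y"
    and X: "distributed M lborel X (gamma_density msr \<theta>sr)"
    and Y: "distributed M lborel Y (gamma_density mrr \<theta>rr)"
    and "0 < msr" "0 < mrr" "0 < \<theta>sr" "0 < \<theta>rr"
    and "0 < Ps" "0 < Pr" "0 \<le> Cx" "Cx < 1"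
  shows "prob {\<omega>\<in>space M. r < R_sr Ps Pr Cx (X \<omega>) (Y \<omega>)} =
    (LBINT y:{0<..}. gamma_density mrr \<theta>rr y *
       (1 - erlang_CDF (msr - 1) 1 ((Pr*y + 1) / (Ps*\<theta>sr) * Psi r (Pr*y*Cx / (Pr*y + 1)))))"
proof -
  define T where "T y = (Pr*y + 1) * Psi r (Pr*y*Cx / (Pr*y + 1)) / Ps" for y
  define h where "h y = gamma_density mrr \<theta>rr y *
       (1 - erlang_CDF (msr - 1) 1 ((Pr*y + 1) / (Ps*\<theta>sr) * Psi r (Pr*y*Cx / (Pr*y + 1))))" for y
  have X': "distributed M lborel X (erlang_density (msr - 1) (1/\<theta>sr))"
    using X assms by (simp add: gamma_density_eq_erlang_density)
  have Y': "distributed M lborel Y (erlang_density (mrr - 1) (1/\<theta>rr))"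
    using Y assms by (simp add: gamma_density_eq_erlang_density)
  have [measurable]: "T \<in> borel_measurable borel" "h \<in> borel_measurable borel"
    unfolding T_def h_def Psi_def gamma_density_def erlang_CDF_def by measurable
  have h_nonneg: "0 \<le> h y" for y
    using assms erlang_CDF_le_1[of 1] by (auto simp: h_def gamma_density_def)
  have "Measurable.pred (borel \<Otimes>\<^sub>M borel) (\<lambda>(x, y). r < R_sr Ps Pr Cx x y)"
    unfolding R_sr_def by measurable
  moreover have "r < R_sr Ps Pr Cx x y \<longleftrightarrow> T y < x" if "0 \<le> x" "0 \<le> y" for x y
    using assms that by (simp add: less_R_sr_iff T_def pos_divide_less_eq mult.commute)
  ultimately have "emeasure M {\<omega>\<in>space M. r < R_sr Ps Pr Cx (X \<omega>) (Y \<omega>)} =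
      (\<integral>\<^sup>+ y. ennreal (erlang_density (mrr - 1) (1/\<theta>rr) y) *
        ennreal (1 - erlang_CDF (msr - 1) (1/\<theta>sr) (T y)) \<partial>lborel)"
    using assms
    by (intro emeasure_indep_erlang_threshold[OF indep X' Y']) (auto simp: erlang_density_def)
  also have "\<dots> = (\<integral>\<^sup>+ y. ennreal (indicator {0<..} y * h y) \<partial>lborel)"
  proof (intro nn_integral_cong_AE eventually_mono[OF AE_lborel_singleton[of 0]])
    fix y :: real
    assume "y \<noteq> 0"
    have "erlang_CDF (msr - 1) (1/\<theta>sr) (T y) =
        erlang_CDF (msr - 1) 1 ((Pr*y + 1) / (Ps*\<theta>sr) * Psi r (Pr*y*Cx / (Pr*y + 1)))"
      using assms by (simp add: erlang_CDF_transform[of "1/\<theta>sr"] T_def mult.commute)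
    then show "ennreal (erlang_density (mrr - 1) (1/\<theta>rr) y) * ennreal (1 - erlang_CDF (msr - 1) (1/\<theta>sr) (T y))
        = ennreal (indicator {0<..} y * h y)"
      using \<open>y \<noteq> 0\<close> assms erlang_CDF_le_1[of 1]
      by (cases "y < 0")
         (auto simp: erlang_density_def h_def gamma_density_eq_erlang_density ennreal_mult[symmetric])
  qed
  moreover have "(LBINT y:{0<..}. h y) = enn2real (\<integral>\<^sup>+ y. ennreal (indicator {0<..} y * h y) \<partial>lborel)"
    unfolding set_lebesgue_integral_def real_scaleR_def by (rule integral_eq_nn_integral) (use h_nonneg in auto)
  ultimately show ?thesis
    by (simp add: measure_def h_def)
qed

lemma (in prob_space) borel_measurable_prob_greater:
  fixes Z :: "'a \<Rightarrow> real"
  assumes [measurable]: "Z \<in> borel_measurable M"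
  shows "(\<lambda>r. prob {\<omega>\<in>space M. r < Z \<omega>}) \<in> borel_measurable borel"
proof -
  have "mono (\<lambda>r. - prob {\<omega>\<in>space M. r < Z \<omega>})"
    by (intro monoI le_imp_neg_le finite_measure_mono) auto
  then have "(\<lambda>r. - (- prob {\<omega>\<in>space M. r < Z \<omega>})) \<in> borel_measurable borel"
    by (intro borel_measurable_uminus borel_measurable_mono)
  then show ?thesis
    by simp
qed

lemma (in prob_space) expectation_eq_integral_prob_greater:
  fixes Z :: "'a \<Rightarrow> real"
  assumes [measurable]: "Z \<in> borel_measurable M" and "AE \<omega> in M. 0 \<le> Z \<omega>"
  shows "expectation Z = (LBINT r:{0<..}. prob {\<omega>\<in>space M. r < Z \<omega>})"
proof -
  interpret pair_sigma_finite M lborel ..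
  define S where "S = {p\<in>space (M \<Otimes>\<^sub>M lborel). 0 < snd p \<and> snd p < Z (fst p)}"
  have [measurable]: "S \<in> sets (M \<Otimes>\<^sub>M lborel)"
    unfolding S_def by measurable
  have "(\<integral>\<^sup>+ \<omega>. ennreal (Z \<omega>) \<partial>M) = (\<integral>\<^sup>+ \<omega>. (\<integral>\<^sup>+ r. indicator S (\<omega>, r) \<partial>lborel) \<partial>M)"
  proof (rule nn_integral_cong)
    fix \<omega>
    assume "\<omega> \<in> space M"
    then have "(\<integral>\<^sup>+ r. indicator S (\<omega>, r) \<partial>lborel) = emeasure lborel {0<..<Z \<omega>}"
      by (auto intro!: nn_integral_cong simp: S_def space_pair_measure indicator_def simp flip: nn_integral_indicator)
    also have "\<dots> = ennreal (Z \<omega>)"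
      by (cases "0 \<le> Z \<omega>") (auto simp: ennreal_neg)
    finally show "ennreal (Z \<omega>) = (\<integral>\<^sup>+ r. indicator S (\<omega>, r) \<partial>lborel)" ..
  qed
  also have "\<dots> = (\<integral>\<^sup>+ r. (\<integral>\<^sup>+ \<omega>. indicator S (\<omega>, r) \<partial>M) \<partial>lborel)"
    by (rule Fubini'[symmetric]) measurable
  also have "\<dots> = (\<integral>\<^sup>+ r. ennreal (indicator {0<..} r * prob {\<omega>\<in>space M. r < Z \<omega>}) \<partial>lborel)"
  proof (rule nn_integral_cong)
    fix r :: real
    have "(\<integral>\<^sup>+ \<omega>. indicator S (\<omega>, r) \<partial>M) = (\<integral>\<^sup>+ \<omega>. indicator {0<..} r * indicator {\<omega>\<in>space M. r < Z \<omega>} \<omega> \<partial>M)"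
      by (intro nn_integral_cong) (auto simp: S_def space_pair_measure indicator_def)
    also have "\<dots> = indicator {0<..} r * emeasure M {\<omega>\<in>space M. r < Z \<omega>}"
      by (rule nn_integral_cmult_indicator) measurable
    finally show "(\<integral>\<^sup>+ \<omega>. indicator S (\<omega>, r) \<partial>M) = ennreal (indicator {0<..} r * prob {\<omega>\<in>space M. r < Z \<omega>})"
      by (simp add: emeasure_eq_measure indicator_def)
  qed
  finally have "expectation Z = enn2real (\<integral>\<^sup>+ r. ennreal (indicator {0<..} r * prob {\<omega>\<in>space M. r < Z \<omega>}) \<partial>lborel)"
    using assms by (simp add: integral_eq_nn_integral)
  also have "\<dots> = (LBINT r:{0<..}. prob {\<omega>\<in>space M. r < Z \<omega>})"
    unfolding set_lebesgue_integral_def real_scaleR_def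
    using borel_measurable_prob_greater[OF assms(1)] by (intro integral_eq_nn_integral[symmetric]) auto
  finally show ?thesis .
qed

lemma (in prob_space) indep_var_functions_of_disjoint_pairs:
  fixes X :: "'i \<Rightarrow> 'a \<Rightarrow> real" and f h :: "real \<Rightarrow> real \<Rightarrow> real"
  assumes "indep_vars (\<lambda>_. borel) X UNIV" and "{a, b} \<inter> {c, d} = {}"
    and [measurable]: "case_prod f \<in> borel_measurable (borel \<Otimes>\<^sub>M borel)"
      "case_prod h \<in> borel_measurable (borel \<Otimes>\<^sub>M borel)"
  shows "indep_var borel (\<lambda>\<omega>. f (X a \<omega>) (X b \<omega>)) borel (\<lambda>\<omega>. h (X c \<omega>) (X d \<omega>))"
proof -
  have "indep_var borel ((\<lambda>x. f (x a) (x b)) \<circ> (\<lambda>\<omega>. \<lambda>i\<in>{a, b}. X i \<omega>))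
      borel ((\<lambda>x. h (x c) (x d)) \<circ> (\<lambda>\<omega>. \<lambda>i\<in>{c, d}. X i \<omega>))"
  proof (intro indep_var_compose[OF indep_var_restrict[OF assms(1,2)]])
    have "(\<lambda>x. case_prod f (x a, x b)) \<in> borel_measurable (Pi\<^sub>M {a, b} (\<lambda>_. borel))"
      by measurable
    then show "(\<lambda>x. f (x a) (x b)) \<in> borel_measurable (Pi\<^sub>M {a, b} (\<lambda>_. borel))"
      by simp
    have "(\<lambda>x. case_prod h (x c, x d)) \<in> borel_measurable (Pi\<^sub>M {c, d} (\<lambda>_. borel))"
      by measurable
    then show "(\<lambda>x. h (x c) (x d)) \<in> borel_measurable (Pi\<^sub>M {c, d} (\<lambda>_. borel))"
      by simp
  qed auto
  then show ?thesis
    by (simp add: comp_def)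
qed

lemma ergodic_rate_integrand_eq:
  fixes Ps Pr Cx \<theta>sr \<theta>rr \<theta>rd \<theta>sd r x :: real
  assumes "0 < x" "0 \<le> r" "0 < Ps" "0 < Pr" "0 \<le> Cx" "Cx < 1"
    and "0 < msr" "0 < mrr" "0 < msd" "0 < \<theta>sr" "0 < \<theta>rr" "0 < \<theta>rd" "0 < \<theta>sd"
  shows "(let \<beta> = Psi r Cx / (Pr * \<theta>rd * (1 - Cx\<^sup>2)) in
           \<Sum>n<mrd. \<Sum>k\<le>n.
             real (n choose k) * Ps ^ k * Gamma (real (k + msd)) / Gamma (real n + 1) *
             (x ^ (mrr - 1) *
              upper_Gamma (real msr) ((Pr * x + 1) / (Ps * \<theta>sr) * Psi r (Pr * x * Cx / (Pr * x + 1))) *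
              \<beta> ^ n * exp (- (\<beta> + x / \<theta>rr)))
             / (Gamma (real msd) * Gamma (real mrr) * Gamma (real msr) *
                \<theta>sd ^ msd * \<theta>rr ^ mrr * (Ps * \<beta> + 1 / \<theta>sd) ^ (k + msd)))
    = R_rd_tail_prob Ps Pr Cx mrd \<theta>rd msd \<theta>sd r *
      (gamma_density mrr \<theta>rr x *
       (1 - erlang_CDF (msr - 1) 1 ((Pr * x + 1) / (Ps * \<theta>sr) * Psi r (Pr * x * Cx / (Pr * x + 1)))))"
proof -
  define z where "z = (Pr * x + 1) / (Ps * \<theta>sr) * Psi r (Pr * x * Cx / (Pr * x + 1))"
  have "Pr * x * Cx \<le> Pr * x"
    using assms by (intro mult_left_le) auto
  then have "Pr * x * Cx \<le> Pr * x + 1"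
    by linarith
  moreover have "0 < Pr * x + 1"
    using assms by (simp add: add_pos_pos)
  ultimately have "\<bar>Pr * x * Cx / (Pr * x + 1)\<bar> \<le> 1"
    using assms by (simp add: divide_le_eq_1_pos)
  then have "0 \<le> z"
    using assms Psi_nonneg[of r "Pr * x * Cx / (Pr * x + 1)"] by (simp add: z_def)
  then have upper_Gamma: "upper_Gamma (real msr) z = Gamma (real msr) * (1 - erlang_CDF (msr - 1) 1 z)"
    using assms upper_Gamma_eq_erlang_tail[of z "msr - 1"] Gamma_of_nat_eq_fact[of msr] by simp
  define \<beta> where "\<beta> = Psi r Cx / (Pr * \<theta>rd * (1 - Cx\<^sup>2))"
  define L where "L = Ps * \<beta> + 1 / \<theta>sd"
  have "0 \<le> \<beta>"
    using assms Psi_nonneg[of r Cx] abs_square_less_1[of Cx] by (simp add: \<beta>_def)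
  then have "0 < L"
    using assms unfolding L_def by (intro add_nonneg_pos mult_nonneg_nonneg) auto
  have exp: "exp (- (\<beta> + x / \<theta>rr)) = exp (- \<beta>) * exp (- x / \<theta>rr)"
    by (simp flip: exp_add)
  have "Gamma (real msr) \<noteq> 0" "Gamma (real mrr) \<noteq> 0" "Gamma (real msd) \<noteq> 0"
    using assms by (simp_all add: Gamma_of_nat_eq_fact)
  then show ?thesis
    unfolding R_rd_tail_prob_def Let_def \<beta>_def[symmetric] L_def[symmetric] z_def[symmetric]
      upper_Gamma exp sum_distrib_right
    using assms \<open>0 < L\<close> by (intro sum.cong refl) (simp add: gamma_density_def Gamma_fact field_simps)
qed

lemma (in prob_space) prob_min_R_sr_R_rd_greater:
  fixes g :: "link \<Rightarrow> 'a \<Rightarrow> real" and m :: "link \<Rightarrow> nat" and \<theta> :: "link \<Rightarrow> real"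
  assumes "indep_vars (\<lambda>_. borel) g UNIV"
    and g: "\<And>l. distributed M lborel (g l) (gamma_density (m l) (\<theta> l))"
    and "\<And>l. 0 < m l" "\<And>l. 0 < \<theta> l"
    and "0 < Ps" "0 < Pr" "0 \<le> Cx" "Cx < 1" "0 \<le> r"
  shows "prob {\<omega>\<in>space M. r < min (R_sr Ps Pr Cx (g SR \<omega>) (g RR \<omega>)) (R_rd Ps Pr Cx (g RD \<omega>) (g SD \<omega>))}
    = (LBINT x:{0<..}.
            (let \<beta> = Psi r Cx / (Pr * \<theta> RD * (1 - Cx\<^sup>2)) in
             \<Sum>n<m RD. \<Sum>k\<le>n.
               real (n choose k) * Ps ^ k * Gamma (real (k + m SD)) / Gamma (real n + 1) *
               (x ^ (m RR - 1) *
                upper_Gamma (real (m SR))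
                  ((Pr * x + 1) / (Ps * \<theta> SR) * Psi r (Pr * x * Cx / (Pr * x + 1))) *
                \<beta> ^ n * exp (- (\<beta> + x / \<theta> RR)))
               / (Gamma (real (m SD)) * Gamma (real (m RR)) * Gamma (real (m SR)) *
                  \<theta> SD ^ m SD * \<theta> RR ^ m RR * (Ps * \<beta> + 1 / \<theta> SD) ^ (k + m SD))))"
    (is "_ = (LBINT x:{0<..}. ?integrand x)")
proof -
  have "(\<lambda>(x, y). x :: real) \<in> borel_measurable (borel \<Otimes>\<^sub>M borel)"
    by measurable
  then have indep_g: "indep_var borel (g a) borel (g b)" if "a \<noteq> b" for a b
    using indep_var_functions_of_disjoint_pairs[OF assms(1), of a a b b "\<lambda>x y. x" "\<lambda>x y. x"] that
    by simp
  define A where "A \<omega> = R_sr Ps Pr Cx (g SR \<omega>) (g RR \<omega>)" for \<omega>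
  define B where "B \<omega> = R_rd Ps Pr Cx (g RD \<omega>) (g SD \<omega>)" for \<omega>
  have "case_prod (R_sr Ps Pr Cx) \<in> borel_measurable (borel \<Otimes>\<^sub>M borel)"
    "case_prod (R_rd Ps Pr Cx) \<in> borel_measurable (borel \<Otimes>\<^sub>M borel)"
    unfolding R_sr_def R_rd_def by measurable
  then have indep_AB: "indep_var borel A borel B"
    using indep_var_functions_of_disjoint_pairs[OF assms(1), of SR RR RD SD]
    by (simp add: A_def[abs_def] B_def[abs_def])
  have "prob {\<omega>\<in>space M. r < min (A \<omega>) (B \<omega>)} = prob {\<omega>\<in>space M. r < B \<omega>} * prob {\<omega>\<in>space M. r < A \<omega>}"
    using prob_indep_random_variable[OF indep_AB, of "{r<..}" "{r<..}"] by simp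
  also have "\<dots> = R_rd_tail_prob Ps Pr Cx (m RD) (\<theta> RD) (m SD) (\<theta> SD) r *
     (LBINT x:{0<..}. gamma_density (m RR) (\<theta> RR) x *
       (1 - erlang_CDF (m SR - 1) 1 ((Pr*x + 1) / (Ps*\<theta> SR) * Psi r (Pr*x*Cx / (Pr*x + 1)))))"
    unfolding A_def B_def using assms
    by (simp add: prob_R_sr_greater[OF indep_g g g] prob_R_rd_greater[OF indep_g g g])
  also have "\<dots> = (LBINT x:{0<..}. ?integrand x)"
    unfolding set_integral_mult_right[symmetric]
    using assms by (intro set_lebesgue_integral_cong allI impI) (simp, rule ergodic_rate_integrand_eq[symmetric], auto)
  finally show ?thesis
    by (simp add: A_def B_def)
qed

theorem theorem6:
  fixes M :: "'a measure" and g :: "link \<Rightarrow> 'a \<Rightarrow> real"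
    and m :: "link \<Rightarrow> nat" and \<pi> \<theta> :: "link \<Rightarrow> real"
    and Ps Pr Cx :: real
  assumes "prob_space M"
    and "Ps > 0" and "Pr > 0" and "0 \<le> Cx" and "Cx < 1"
    and "\<And>l. m l \<ge> 1" and "\<And>l. \<pi> l > 0" and "\<And>l. \<theta> l = \<pi> l / real (m l)"
    and "prob_space.indep_vars M (\<lambda>_. borel) g UNIV"
    and "\<And>l. distributed M lborel (g l) (\<lambda>x. ennreal (gamma_density (m l) (\<theta> l) x))"
  shows "prob_space.expectation M
           (\<lambda>\<omega>. min (R_sr Ps Pr Cx (g SR \<omega>) (g RR \<omega>)) (R_rd Ps Pr Cx (g RD \<omega>) (g SD \<omega>)))
       = (LBINT r:{0<..}. LBINT x:{0<..}.
            (let \<beta> = Psi r Cx / (Pr * \<theta> RD * (1 - Cx\<^sup>2)) in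
             \<Sum>n<m RD. \<Sum>k\<le>n.
               real (n choose k) * Ps ^ k * Gamma (real (k + m SD)) / Gamma (real n + 1) *
               (x ^ (m RR - 1) *
                upper_Gamma (real (m SR))
                  ((Pr * x + 1) / (Ps * \<theta> SR) * Psi r (Pr * x * Cx / (Pr * x + 1))) *
                \<beta> ^ n * exp (- (\<beta> + x / \<theta> RR)))
               / (Gamma (real (m SD)) * Gamma (real (m RR)) * Gamma (real (m SR)) *
                  \<theta> SD ^ m SD * \<theta> RR ^ m RR * (Ps * \<beta> + 1 / \<theta> SD) ^ (k + m SD))))"
    (is "_ = ?rhs")
proof -
  interpret prob_space M by fact
  have m: "0 < m l" and \<theta>: "0 < \<theta> l" for l
    using assms(6-8)[of l] by auto
  have [measurable]: "g l \<in> borel_measurable M" for l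
    using distributed_measurable[OF assms(10)] by simp
  have "AE \<omega> in M. 0 \<le> g l \<omega>" for l
    using AE_nonneg_if_distributed[OF assms(10)] by (simp add: gamma_density_def)
  then have "AE \<omega> in M. 0 \<le> g SR \<omega> \<and> 0 \<le> g RR \<omega> \<and> 0 \<le> g RD \<omega> \<and> 0 \<le> g SD \<omega>"
    by simp
  then have "AE \<omega> in M. 0 \<le> min (R_sr Ps Pr Cx (g SR \<omega>) (g RR \<omega>)) (R_rd Ps Pr Cx (g RD \<omega>) (g SD \<omega>))"
    by eventually_elim (use assms(2-5) in \<open>simp add: R_sr_nonneg R_rd_nonneg\<close>)
  then have "expectation (\<lambda>\<omega>. min (R_sr Ps Pr Cx (g SR \<omega>) (g RR \<omega>)) (R_rd Ps Pr Cx (g RD \<omega>) (g SD \<omega>))) =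
      (LBINT r:{0<..}. prob {\<omega>\<in>space M. r < min (R_sr Ps Pr Cx (g SR \<omega>) (g RR \<omega>)) (R_rd Ps Pr Cx (g RD \<omega>) (g SD \<omega>))})"
    by (intro expectation_eq_integral_prob_greater) (simp_all add: R_sr_def R_rd_def)
  also have "\<dots> = ?rhs"
    using assms(2-5,9,10) m \<theta>
    by (intro set_lebesgue_integral_cong allI impI) (simp, rule prob_min_R_sr_R_rd_greater, auto)
  finally show ?thesis .
qed

end
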